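(* Let $\ell\ge 2$ and $k>\ell$ be integers. Then $\overline{\alpha}(\{1,\dots,\ell-1,k\})=\frac{1}{\ell}$ if $k\not\equiv 0\pmod{\ell}$, and $\overline{\alpha}(\{1,\dots,\ell-1,k\})=\frac{k}{\ell(k+1)}$ if $k\equiv 0\pmod{\ell}$.
   Context: For a finite set $S$ of positive integers, the distance graph $G(S)$ has vertex set $\mathbb{Z}$, with $i,j$ adjacent iff $|i-j|\in S$. The density of $A\subseteq\mathbb{Z}$ is $\delta(A)=\limsup_{N\to\infty}\frac{|A\cap[-N,N]|}{2N+1}$, and the independence ratio $\overline{\alpha}(S)$ is the supremum of $\delta(A)$ over independent sets $A$ of $G(S)$. *)

theory Defs
  imports "HOL-Analysis.Analysis"
begin

definition dist_adj :: "nat set \<Rightarrow> int \<Rightarrow> int \<Rightarrow> bool" where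
  "dist_adj S i j \<longleftrightarrow> nat \<bar>i - j\<bar> \<in> S"

definition dist_independent :: "nat set \<Rightarrow> int set \<Rightarrow> bool" where
  "dist_independent S A \<longleftrightarrow> (\<forall>i\<in>A. \<forall>j\<in>A. \<not> dist_adj S i j)"

definition upper_density :: "int set \<Rightarrow> ereal" where
  "upper_density A = limsup (\<lambda>N::nat. ereal (real (card (A \<inter> {- int N .. int N})) / (2 * real N + 1)))"

definition indep_ratio :: "nat set \<Rightarrow> ereal" where
  "indep_ratio S = (SUP A \<in> {A. dist_independent S A}. upper_density A)"

end

(*
  An independent set of G({1..l-1} \<union> {k}) has at most one element in any l consecutive
  integers. If k = m l, every k + 1 consecutive integers contain two points at distance k, one of
  which is missed, and the remaining k = m l points hold at most m elements; this gives the upper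
  bound m / (k + 1) = k / (l (k + 1)). Periodic independent sets attain the bounds: the multiples
  of l when l does not divide k, and the residues 0, l, ..., (m - 1) l modulo m l + 1 otherwise.
  Window counts are turned into densities by covering [-N, N] with windows.
*)
theory Submission
  imports Defs "HOL-Real_Asymp.Real_Asymp"
begin

lemma card_Int_atLeastLessThan_add:
  fixes A :: "int set"
  shows "card (A \<inter> {a..<a + int (m + n)})
           = card (A \<inter> {a..<a + int m}) + card (A \<inter> {a + int m..<a + int m + int n})"
proof -
  have "{a..<a + int (m + n)} = {a..<a + int m} \<union> {a + int m..<a + int m + int n}"
    by auto
  then show ?thesis
    by (simp add: Int_Un_distrib card_Un_disjoint disjoint_iff)
qed

lemma card_Int_atLeastLessThan_mult_le:
  fixes A :: "int set"
  assumes "\<And>x. card (A \<inter> {x..<x + int p}) \<le> c"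
  shows "card (A \<inter> {a..<a + int (q * p)}) \<le> q * c"
proof (induction q)
  case (Suc q)
  then show ?case
    using assms[of "a + int (q * p)"] card_Int_atLeastLessThan_add[of A a "q * p" p]
    by (simp add: add.commute)
qed simp

lemma card_Int_atLeastLessThan_mult_eq:
  fixes A :: "int set"
  assumes "\<And>x. card (A \<inter> {x..<x + int p}) = c"
  shows "card (A \<inter> {a..<a + int (q * p)}) = q * c"
proof (induction q)
  case (Suc q)
  then show ?case
    using assms[of "a + int (q * p)"] card_Int_atLeastLessThan_add[of A a "q * p" p]
    by (simp add: add.commute)
qed simp

lemma card_Int_centered_le_of_windows:
  fixes A :: "int set"
  assumes "p > 0" and "\<And>x. card (A \<inter> {x..<x + int p}) \<le> c"
  shows "real (card (A \<inter> {- int N .. int N}))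
           \<le> real c / real p * (2 * real N + 1) + real c"
proof -
  define q where "q = (2 * N + 1) div p + 1"
  have "q * p = (2 * N + 1) div p * p + p"
    by (simp add: q_def)
  then have "2 * N + 1 < q * p" and qp: "q * p \<le> 2 * N + 1 + p"
    using div_mult_mod_eq[of "2 * N + 1" p] mod_less_divisor[OF \<open>p > 0\<close>, of "2 * N + 1"]
    by linarith+
  then have "2 * int N + 1 < int (q * p)"
    by linarith
  then have "A \<inter> {- int N .. int N} \<subseteq> A \<inter> {- int N..<- int N + int (q * p)}"
    by auto
  then have "card (A \<inter> {- int N .. int N}) \<le> card (A \<inter> {- int N..<- int N + int (q * p)})"
    by (intro card_mono) auto
  also have "\<dots> \<le> q * c"
    by (rule card_Int_atLeastLessThan_mult_le[OF assms(2)])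
  finally have "real (card (A \<inter> {- int N .. int N})) \<le> real q * real c"
    by (simp flip: of_nat_mult)
  also have "\<dots> = real q * real p * real c / real p"
    using \<open>p > 0\<close> by simp
  also have "\<dots> \<le> (2 * real N + 1 + real p) * real c / real p"
    using qp by (intro divide_right_mono mult_right_mono) (simp_all flip: of_nat_mult)
  finally show ?thesis
    using \<open>p > 0\<close> by (simp add: field_simps)
qed

lemma card_Int_centered_ge_of_windows:
  fixes A :: "int set"
  assumes "p > 0" and "\<And>x. card (A \<inter> {x..<x + int p}) = c"
  shows "real c / real p * (2 * real N + 1) - real c
           \<le> real (card (A \<inter> {- int N .. int N}))"
proof -
  define q where "q = (2 * N + 1) div p"
  have "q * p \<le> 2 * N + 1" and qp: "2 * N + 1 \<le> q * p + p"
    using div_mult_mod_eq[of "2 * N + 1" p] mod_less_divisor[OF \<open>p > 0\<close>, of "2 * N + 1"]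
    unfolding q_def by linarith+
  have "(2 * real N + 1 - real p) * real c / real p \<le> real q * real p * real c / real p"
    using qp by (intro divide_right_mono mult_right_mono) (simp_all flip: of_nat_mult)
  also have "\<dots> = real (q * c)"
    using \<open>p > 0\<close> by simp
  also have "q * c = card (A \<inter> {- int N..<- int N + int (q * p)})"
    by (rule card_Int_atLeastLessThan_mult_eq[OF assms(2), symmetric])
  also have "\<dots> \<le> card (A \<inter> {- int N .. int N})"
  proof (intro card_mono)
    have "int (q * p) \<le> 2 * int N + 1"
      using \<open>q * p \<le> 2 * N + 1\<close> by linarith
    then show "A \<inter> {- int N..<- int N + int (q * p)} \<subseteq> A \<inter> {- int N .. int N}"
      by auto
  qed simp
  finally show ?thesis
    using \<open>p > 0\<close> by (simp add: field_simps)
qed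

lemma upper_density_le_of_card_le:
  assumes "\<And>N. real (card (A \<inter> {- int N .. int N})) \<le> \<delta> * (2 * real N + 1) + C"
  shows "upper_density A \<le> ereal \<delta>"
proof -
  have "((\<lambda>N::nat. \<delta> + C / (2 * real N + 1)) \<longlongrightarrow> \<delta>) sequentially"
    by real_asymp
  then have "limsup (\<lambda>N::nat. ereal (\<delta> + C / (2 * real N + 1))) = ereal \<delta>"
    by (intro lim_imp_Limsup) auto
  moreover have
    "real (card (A \<inter> {- int N .. int N})) / (2 * real N + 1) \<le> \<delta> + C / (2 * real N + 1)" for N
  proof -
    have "real (card (A \<inter> {- int N .. int N})) / (2 * real N + 1)
            \<le> (\<delta> * (2 * real N + 1) + C) / (2 * real N + 1)"
      using assms[of N] by (intro divide_right_mono) auto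
    then show ?thesis
      by (simp add: add_divide_distrib)
  qed
  ultimately show ?thesis
    unfolding upper_density_def
    by (metis (mono_tags, lifting) Limsup_mono always_eventually ereal_less_eq(3))
qed

lemma upper_density_ge_of_card_ge:
  assumes "\<And>N. \<delta> * (2 * real N + 1) - C \<le> real (card (A \<inter> {- int N .. int N}))"
  shows "ereal \<delta> \<le> upper_density A"
proof -
  have "((\<lambda>N::nat. \<delta> - C / (2 * real N + 1)) \<longlongrightarrow> \<delta>) sequentially"
    by real_asymp
  then have "limsup (\<lambda>N::nat. ereal (\<delta> - C / (2 * real N + 1))) = ereal \<delta>"
    by (intro lim_imp_Limsup) auto
  moreover have
    "\<delta> - C / (2 * real N + 1) \<le> real (card (A \<inter> {- int N .. int N})) / (2 * real N + 1)" for N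
  proof -
    have "(\<delta> * (2 * real N + 1) - C) / (2 * real N + 1)
            \<le> real (card (A \<inter> {- int N .. int N})) / (2 * real N + 1)"
      using assms[of N] by (intro divide_right_mono) auto
    then show ?thesis
      by (simp add: diff_divide_distrib)
  qed
  ultimately show ?thesis
    unfolding upper_density_def
    by (metis (mono_tags, lifting) Limsup_mono always_eventually ereal_less_eq(3))
qed

lemma upper_density_le_of_windows:
  fixes A :: "int set"
  assumes "p > 0" and "\<And>x. card (A \<inter> {x..<x + int p}) \<le> c"
  shows "upper_density A \<le> ereal (real c / real p)"
  by (rule upper_density_le_of_card_le) (rule card_Int_centered_le_of_windows[OF assms])

lemma upper_density_ge_of_windows:
  fixes A :: "int set"
  assumes "p > 0" and "\<And>x. card (A \<inter> {x..<x + int p}) = c"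
  shows "ereal (real c / real p) \<le> upper_density A"
  by (rule upper_density_ge_of_card_ge) (rule card_Int_centered_ge_of_windows[OF assms])

lemma card_periodic_Int_atLeastLessThan:
  fixes R :: "int set"
  assumes "R \<subseteq> {0..<int p}"
  shows "card ({n. n mod int p \<in> R} \<inter> {x..<x + int p}) = card R"
proof -
  have "bij_betw (\<lambda>n. n mod int p) ({n. n mod int p \<in> R} \<inter> {x..<x + int p}) R"
  proof (rule bij_betw_byWitness[where f' = "\<lambda>r. x + (r - x) mod int p"])
    show "\<forall>n \<in> {n. n mod int p \<in> R} \<inter> {x..<x + int p}.
            x + (n mod int p - x) mod int p = n"
    proof
      fix n assume "n \<in> {n. n mod int p \<in> R} \<inter> {x..<x + int p}"
      then have "(n - x) mod int p = n - x"
        by (intro mod_pos_pos_trivial) auto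
      then show "x + (n mod int p - x) mod int p = n"
        by (simp add: mod_diff_left_eq)
    qed
    have "r mod int p = r" if "r \<in> R" for r
      using that assms by (intro mod_pos_pos_trivial) auto
    then show "\<forall>r\<in>R. (x + (r - x) mod int p) mod int p = r"
      by (simp add: mod_add_right_eq)
    with assms
    show "(\<lambda>r. x + (r - x) mod int p) ` R \<subseteq> {n. n mod int p \<in> R} \<inter> {x..<x + int p}"
      by force
  qed auto
  then show ?thesis
    by (rule bij_betw_same_card)
qed

lemma dist_independent_periodic:
  fixes K :: int
  assumes "\<And>r s d. r \<in> R \<Longrightarrow> s \<in> R \<Longrightarrow> d \<in> S \<Longrightarrow> \<not> K dvd r - s + int d"
  shows "dist_independent S {n. n mod K \<in> R}"
proof -
  have no_edge: "nat (b - a) \<notin> S" if "a mod K \<in> R" "b mod K \<in> R" "a \<le> b" for a b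
  proof
    assume "nat (b - a) \<in> S"
    moreover have "K dvd (b - b mod K) - (a - a mod K)"
      by (simp add: minus_mod_eq_mult_div)
    ultimately show False
      using assms[of "a mod K" "b mod K" "nat (b - a)"] that by (simp add: algebra_simps)
  qed
  show ?thesis
    unfolding dist_independent_def dist_adj_def
    using no_edge
    by (metis abs_minus_commute abs_of_nonneg diff_ge_0_iff_ge linorder_le_cases mem_Collect_eq)
qed

lemma dist_independent_card_window_le_1:
  assumes "dist_independent S A" and "{1..l-1} \<subseteq> S"
  shows "card (A \<inter> {x..<x + int l}) \<le> 1"
proof -
  have "a = b" if "a \<in> A \<inter> {x..<x + int l}" "b \<in> A \<inter> {x..<x + int l}" for a b
  proof (rule ccontr)
    assume "a \<noteq> b"
    with that have "nat \<bar>a - b\<bar> \<in> {1..l-1}"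
      by auto
    with assms(2) have "nat \<bar>a - b\<bar> \<in> S"
      by blast
    with that assms(1) show False
      unfolding dist_independent_def dist_adj_def by blast
  qed
  then show ?thesis
    by (simp add: card_le_Suc0_iff_eq)
qed

lemma dist_independent_card_window_le:
  assumes "dist_independent S A" and "{1..l-1} \<subseteq> S" and "m * l \<in> S"
  shows "card (A \<inter> {x..<x + int (m * l + 1)}) \<le> m"
proof -
  obtain y where "A \<inter> {x..<x + int (m * l + 1)} \<subseteq> A \<inter> {y..<y + int (m * l)}"
  proof (cases "x \<in> A")
    case True
    moreover have "nat \<bar>x - (x + int (m * l))\<bar> = m * l"
      by (simp del: of_nat_mult)
    ultimately have "x + int (m * l) \<notin> A"
      using assms(1,3) unfolding dist_independent_def dist_adj_def by metis
    then have "A \<inter> {x..<x + int (m * l + 1)} \<subseteq> A \<inter> {x..<x + int (m * l)}"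
      by (auto simp del: of_nat_mult) (smt (verit))
    then show ?thesis using that by blast
  next
    case False
    then have "A \<inter> {x..<x + int (m * l + 1)} \<subseteq> A \<inter> {x + 1..<x + 1 + int (m * l)}"
      by (auto simp del: of_nat_mult) (smt (verit))
    then show ?thesis using that by blast
  qed
  then have "card (A \<inter> {x..<x + int (m * l + 1)}) \<le> card (A \<inter> {y..<y + int (m * l)})"
    by (intro card_mono) auto
  also have "\<dots> \<le> m * 1"
    using dist_independent_card_window_le_1[OF assms(1,2)]
    by (rule card_Int_atLeastLessThan_mult_le)
  finally show ?thesis
    by simp
qed

lemma indep_ratio_le_of_windows:
  assumes "p > 0" and "\<And>A x. dist_independent S A \<Longrightarrow> card (A \<inter> {x..<x + int p}) \<le> c"
  shows "indep_ratio S \<le> ereal (real c / real p)"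
  unfolding indep_ratio_def using assms by (auto intro!: SUP_least upper_density_le_of_windows)

lemma indep_ratio_ge_periodic:
  assumes "p > 0" and "R \<subseteq> {0..<int p}" and "dist_independent S {n. n mod int p \<in> R}"
  shows "ereal (real (card R) / real p) \<le> indep_ratio S"
proof -
  have "ereal (real (card R) / real p) \<le> upper_density {n. n mod int p \<in> R}"
    using assms(1) card_periodic_Int_atLeastLessThan[OF assms(2)]
    by (rule upper_density_ge_of_windows)
  also have "\<dots> \<le> indep_ratio S"
    unfolding indep_ratio_def using assms(3) by (auto intro: SUP_upper)
  finally show ?thesis .
qed

lemma dist_independent_multiples:
  assumes "\<not> l dvd k"
  shows "dist_independent ({1..l-1} \<union> {k}) {n. n mod int l \<in> {0}}"
proof (rule dist_independent_periodic)
  fix r s :: int and d assume "r \<in> {0}" "s \<in> {0}" "d \<in> {1..l-1} \<union> {k}"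
  with assms show "\<not> int l dvd r - s + int d"
    by (auto dest: dvd_imp_le)
qed

lemma dist_independent_spaced_residues:
  assumes "l \<ge> 2"
  shows "dist_independent ({1..l-1} \<union> {m * l})
           {n. n mod int (m * l + 1) \<in> (\<lambda>i. int (i * l)) ` {..<m}}"
proof (rule dist_independent_periodic)
  fix r s :: int and d
  assume "r \<in> (\<lambda>i. int (i * l)) ` {..<m}" "s \<in> (\<lambda>i. int (i * l)) ` {..<m}"
    and d: "d \<in> {1..l-1} \<union> {m * l}"
  then obtain i j where "i < m" "j < m" and rs: "r - s = (int i - int j) * int l"
    by (auto simp: algebra_simps)
  show "\<not> int (m * l + 1) dvd r - s + int d"
  proof
    assume dvd: "int (m * l + 1) dvd r - s + int d"
    from d consider "1 \<le> d" "d < l" | "d = m * l"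
      by fastforce
    then show False
    proof cases
      case 1
      have "\<bar>int i - int j\<bar> * int l \<le> (int m - 1) * int l"
        using \<open>i < m\<close> \<open>j < m\<close> by (intro mult_right_mono) auto
      moreover have "\<bar>r - s\<bar> = \<bar>int i - int j\<bar> * int l"
        by (simp add: rs abs_mult)
      ultimately have "\<bar>r - s\<bar> \<le> int m * int l - int l"
        by (simp add: algebra_simps)
      then have "\<bar>r - s + int d\<bar> < int (m * l + 1)"
        using 1 abs_triangle_ineq[of "r - s" "int d"] by simp
      have "r - s + int d = 0"
      proof (rule ccontr)
        assume "r - s + int d \<noteq> 0"
        with dvd have "\<bar>int (m * l + 1)\<bar> \<le> \<bar>r - s + int d\<bar>"
          by (rule dvd_imp_le_int[rotated])
        with \<open>\<bar>r - s + int d\<bar> < int (m * l + 1)\<close> show False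
          by simp
      qed
      then have "l dvd d"
        using rs by (metis add.inverse_unique dvd_minus_iff dvd_triv_right of_nat_dvd_iff)
      with 1 show False
        using dvd_imp_le[of l d] by simp
    next
      case 2
      have "coprime (int (m * l + 1)) (int l)"
        using gcd_add_mult[of "int l" "int m" 1]
        by (simp add: coprime_iff_gcd_eq_1 gcd.commute add.commute)
      moreover have "r - s + int d = (int i - int j + int m) * int l"
        using rs 2 by (simp add: algebra_simps)
      ultimately have "int (m * l + 1) dvd int i - int j + int m"
        using dvd by (simp add: coprime_dvd_mult_left_iff)
      moreover have "0 < int i - int j + int m"
        using \<open>j < m\<close> by simp
      moreover have "int i - int j + int m < int (m * l + 1)"
      proof -
        have "int m * 2 \<le> int m * int l"
          using assms by (intro mult_left_mono) auto
        moreover have "int (m * l + 1) = int m * int l + 1"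
          by simp
        ultimately show ?thesis
          using \<open>i < m\<close> by linarith
      qed
      ultimately show False
        using zdvd_imp_le by fastforce
    qed
  qed
qed

lemma indep_ratio_not_dvd:
  assumes "l > 0" and "\<not> l dvd k"
  shows "indep_ratio ({1..l-1} \<union> {k}) = ereal (1 / real l)"
proof -
  have "indep_ratio ({1..l-1} \<union> {k}) \<le> ereal (real 1 / real l)"
    using assms by (intro indep_ratio_le_of_windows dist_independent_card_window_le_1) auto
  moreover have "ereal (real (card {0::int}) / real l) \<le> indep_ratio ({1..l-1} \<union> {k})"
    using assms by (intro indep_ratio_ge_periodic dist_independent_multiples) auto
  ultimately show ?thesis
    by (simp add: antisym)
qed

lemma indep_ratio_dvd:
  assumes "l \<ge> 2"
  shows "indep_ratio ({1..l-1} \<union> {m * l}) = ereal (real m / real (m * l + 1))"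
proof -
  define R where "R = (\<lambda>i. int (i * l)) ` {..<m}"
  have "card R = m"
    using assms by (simp add: R_def card_image inj_on_def)
  have "R \<subseteq> {0..<int (m * l + 1)}"
  proof
    fix r assume "r \<in> R"
    then obtain i where "i < m" and r: "r = int (i * l)"
      by (auto simp: R_def)
    then have "int (i * l) < int (m * l + 1)"
      unfolding of_nat_less_iff by (simp add: less_Suc_eq_le mult_le_mono1)
    then show "r \<in> {0..<int (m * l + 1)}"
      using r by simp
  qed
  have "indep_ratio ({1..l-1} \<union> {m * l}) \<le> ereal (real m / real (m * l + 1))"
    by (intro indep_ratio_le_of_windows dist_independent_card_window_le) auto
  moreover have "ereal (real (card R) / real (m * l + 1)) \<le> indep_ratio ({1..l-1} \<union> {m * l})"
    using \<open>R \<subseteq> {0..<int (m * l + 1)}\<close> dist_independent_spaced_residues[OF assms, of m, folded R_def]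
    by (rule indep_ratio_ge_periodic[rotated]) simp
  ultimately show ?thesis
    using \<open>card R = m\<close> by (simp add: antisym)
qed

theorem theorem22:
  fixes l k :: nat
  assumes "l \<ge> 2" and "k > l"
  shows "indep_ratio ({1..l-1} \<union> {k}) =
           (if \<not> l dvd k then ereal (1 / real l)
            else ereal (real k / (real l * (real k + 1))))"
proof (cases "l dvd k")
  case True
  then obtain m where k: "k = m * l"
    by (metis dvdE mult.commute)
  have "real k / (real l * (real k + 1)) = real m / real (m * l + 1)"
    using assms unfolding k by (simp add: mult.commute[of m])
  with True show ?thesis
    unfolding k using indep_ratio_dvd[OF assms(1)] by simp
next
  case False
  with assms show ?thesis
    using indep_ratio_not_dvd by simp
qed

end
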